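(* Let $G$ be a finite GVZ-group with $|\mathrm{cd}(G)|=2$, and let $\phi,\chi\in\mathrm{nl}(G)$. If $[Z(\phi),G]\subseteq\ker\chi$, then $Z(\phi)=Z(\chi)$.
   Context: All groups are finite. $\mathrm{Irr}(G)$ is the set of complex irreducible characters of $G$, $\mathrm{nl}(G)$ the set of non-linear irreducible characters, and $\mathrm{cd}(G)=\{\chi(1):\chi\in\mathrm{Irr}(G)\}$. For a character $\chi$, $Z(\chi)=\{g\in G: |\chi(g)|=\chi(1)\}$. A nonabelian group $G$ is a GVZ-group if for every $\chi\in\mathrm{Irr}(G)$ we have $\chi(g)=0$ for all $g\in G\setminus Z(\chi)$. *)

theory Defs
  imports "HOL-Algebra.Algebra" "Jordan_Normal_Form.Matrix" "HOL-Library.FuncSet"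
begin

definition is_rep :: "('g, 'b) monoid_scheme \<Rightarrow> nat \<Rightarrow> ('g \<Rightarrow> complex mat) \<Rightarrow> bool" where
  "is_rep G n \<rho> \<longleftrightarrow> n > 0 \<and> (\<forall>g\<in>carrier G. \<rho> g \<in> carrier_mat n n)
     \<and> \<rho> \<one>\<^bsub>G\<^esub> = 1\<^sub>m n
     \<and> (\<forall>g\<in>carrier G. \<forall>h\<in>carrier G. \<rho> (g \<otimes>\<^bsub>G\<^esub> h) = \<rho> g * \<rho> h)"

definition is_subspace :: "nat \<Rightarrow> complex vec set \<Rightarrow> bool" where
  "is_subspace n W \<longleftrightarrow> W \<subseteq> carrier_vec n \<and> 0\<^sub>v n \<in> W
     \<and> (\<forall>v\<in>W. \<forall>w\<in>W. v + w \<in> W) \<and> (\<forall>c. \<forall>v\<in>W. c \<cdot>\<^sub>v v \<in> W)"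

definition is_irr_rep :: "('g, 'b) monoid_scheme \<Rightarrow> nat \<Rightarrow> ('g \<Rightarrow> complex mat) \<Rightarrow> bool" where
  "is_irr_rep G n \<rho> \<longleftrightarrow> is_rep G n \<rho> \<and>
     (\<forall>W. is_subspace n W \<and> (\<forall>g\<in>carrier G. \<forall>w\<in>W. \<rho> g *\<^sub>v w \<in> W)
          \<longrightarrow> W = {0\<^sub>v n} \<or> W = carrier_vec n)"

definition mat_trace :: "complex mat \<Rightarrow> complex" where
  "mat_trace A = (\<Sum>i<dim_row A. A $$ (i, i))"

definition Irr :: "('g, 'b) monoid_scheme \<Rightarrow> ('g \<Rightarrow> complex) set" where
  "Irr G = {\<chi>. \<exists>n \<rho>. is_irr_rep G n \<rho> \<and> \<chi> = (\<lambda>g\<in>carrier G. mat_trace (\<rho> g))}"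

definition nl :: "('g, 'b) monoid_scheme \<Rightarrow> ('g \<Rightarrow> complex) set" where
  "nl G = {\<chi>\<in>Irr G. \<chi> \<one>\<^bsub>G\<^esub> \<noteq> 1}"

definition cd :: "('g, 'b) monoid_scheme \<Rightarrow> complex set" where
  "cd G = {\<chi> \<one>\<^bsub>G\<^esub> | \<chi>. \<chi> \<in> Irr G}"

definition Zchar :: "('g, 'b) monoid_scheme \<Rightarrow> ('g \<Rightarrow> complex) \<Rightarrow> 'g set" where
  "Zchar G \<chi> = {g\<in>carrier G. cmod (\<chi> g) = cmod (\<chi> \<one>\<^bsub>G\<^esub>)}"

definition ker_char :: "('g, 'b) monoid_scheme \<Rightarrow> ('g \<Rightarrow> complex) \<Rightarrow> 'g set" where
  "ker_char G \<chi> = {g\<in>carrier G. \<chi> g = \<chi> \<one>\<^bsub>G\<^esub>}"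

definition comm_subgroup :: "('g, 'b) monoid_scheme \<Rightarrow> 'g set \<Rightarrow> 'g set \<Rightarrow> 'g set" where
  "comm_subgroup G A B = generate G
     {inv\<^bsub>G\<^esub> a \<otimes>\<^bsub>G\<^esub> inv\<^bsub>G\<^esub> b \<otimes>\<^bsub>G\<^esub> a \<otimes>\<^bsub>G\<^esub> b | a b. a \<in> A \<and> b \<in> B}"

definition GVZ :: "('g, 'b) monoid_scheme \<Rightarrow> bool" where
  "GVZ G \<longleftrightarrow> group G \<and> \<not> comm_group G \<and>
     (\<forall>\<chi>\<in>Irr G. \<forall>g\<in>carrier G - Zchar G \<chi>. \<chi> g = 0)"

end

theory Submission
  imports Defs "Jordan_Normal_Form.Spectral_Radius" "Jordan_Normal_Form.Schur_Decomposition"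
begin

text \<open>
  For an irreducible character \<chi> of degree n of a finite group G, the first orthogonality
  relation says that |\<chi>(g)|^2 summed over G is |G|. In a GVZ-group \<chi> vanishes off Z(\<chi>) and
  has absolute value n on it, so |Z(\<chi>)| n^2 = |G|. As cd(G) = {1, d}, the characters \<phi> and \<chi>
  both have degree d, hence |Z(\<phi>)| = |Z(\<chi>)|. If g \<in> Z(\<phi>), every commutator [g, x] lies in
  ker \<chi>, so a representation affording \<chi> maps g to a matrix commuting with the whole image; by
  Schur's lemma it is a scalar root of unity, i.e. g \<in> Z(\<chi>). Thus Z(\<phi>) \<subseteq> Z(\<chi>), and equal
  cardinalities give equality.

  The two character facts used, \<chi>(g\<inverse>) = conj \<chi>(g) and \<chi>(g) = n only if g acts trivially,
  come from triangularising a matrix of finite order: its eigenvalues are roots of unity, and a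
  unipotent matrix of finite order is the identity.
\<close>

section \<open>Traces and triangular matrices\<close>

lemma index_mult_mat_sum:
  assumes "A \<in> carrier_mat n m" "B \<in> carrier_mat m p" "i < n" "j < p"
  shows "(A * B) $$ (i,j) = (\<Sum>k<m. A $$ (i,k) * B $$ (k,j))"
  using assms by (simp add: index_mult_mat scalar_prod_def lessThan_atLeast0)

lemma sum_eq_single:
  fixes f :: "nat \<Rightarrow> 'a::comm_monoid_add"
  assumes "i < n" "\<And>l. l < n \<Longrightarrow> l \<noteq> i \<Longrightarrow> f l = 0"
  shows "(\<Sum>l<n. f l) = f i"
proof -
  have "(\<Sum>l<n. f l) = f i + (\<Sum>l\<in>{..<n} - {i}. f l)"
    using assms(1) by (simp add: sum.remove)
  also have "(\<Sum>l\<in>{..<n} - {i}. f l) = 0" using assms(2) by (intro sum.neutral) auto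
  finally show ?thesis by simp
qed

lemma mat_trace_carrier: "A \<in> carrier_mat n n \<Longrightarrow> mat_trace A = (\<Sum>i<n. A $$ (i,i))"
  unfolding mat_trace_def by auto

lemma mat_trace_one: "mat_trace (1\<^sub>m n) = of_nat n"
  by (simp add: mat_trace_def)

lemma mat_trace_mult_comm:
  assumes A: "A \<in> carrier_mat n n" and B: "B \<in> carrier_mat n n"
  shows "mat_trace (A * B) = mat_trace (B * A)"
proof -
  have "mat_trace (A * B) = (\<Sum>i<n. \<Sum>j<n. A $$ (i,j) * B $$ (j,i))"
    using A B by (simp add: mat_trace_carrier[of _ n] index_mult_mat_sum[OF A B] del: index_mult_mat)
  also have "\<dots> = (\<Sum>j<n. \<Sum>i<n. B $$ (j,i) * A $$ (i,j))"
    by (subst sum.swap) (simp add: mult.commute)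
  also have "\<dots> = mat_trace (B * A)"
    using A B by (simp add: mat_trace_carrier[of _ n] index_mult_mat_sum[OF B A] del: index_mult_mat)
  finally show ?thesis .
qed

lemma mat_trace_similar_mat_wit:
  assumes "similar_mat_wit A B P Q" "A \<in> carrier_mat n n"
  shows "mat_trace A = mat_trace B"
proof -
  from assms have c: "B \<in> carrier_mat n n" "P \<in> carrier_mat n n" "Q \<in> carrier_mat n n"
    and QP: "Q * P = 1\<^sub>m n" and A: "A = P * B * Q"
    unfolding similar_mat_wit_def Let_def by auto
  have "mat_trace A = mat_trace (P * (B * Q))" using A c by (simp add: assoc_mult_mat)
  also have "\<dots> = mat_trace ((B * Q) * P)" using c by (intro mat_trace_mult_comm) auto
  also have "\<dots> = mat_trace (B * (Q * P))" using c by (simp add: assoc_mult_mat)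
  also have "\<dots> = mat_trace B" using QP c by simp
  finally show ?thesis .
qed

lemma upper_triangular_mult:
  fixes A B :: "'a::comm_semiring_0 mat"
  assumes A: "A \<in> carrier_mat n n" "upper_triangular A"
    and B: "B \<in> carrier_mat n n" "upper_triangular B"
  shows "upper_triangular (A * B)" and "\<And>i. i < n \<Longrightarrow> (A * B) $$ (i,i) = A $$ (i,i) * B $$ (i,i)"
proof -
  have zero: "A $$ (i,l) * B $$ (l,j) = 0" if "i < n" "l < n" "j < n" "j < i \<or> l \<noteq> i \<and> j = i" for i j l
  proof (cases "l < i")
    case True
    then have "A $$ (i,l) = 0" using that A by (intro upper_triangularD[OF A(2)]) auto
    then show ?thesis by simp
  next
    case False
    then have "B $$ (l,j) = 0" using that B by (intro upper_triangularD[OF B(2)]) auto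
    then show ?thesis by simp
  qed
  show "upper_triangular (A * B)"
  proof (rule upper_triangularI)
    fix i j assume ji: "j < i" and i: "i < dim_row (A * B)"
    then have "i < n" "j < n" using A by auto
    then have "(A * B) $$ (i,j) = (\<Sum>l<n. A $$ (i,l) * B $$ (l,j))"
      by (rule index_mult_mat_sum[OF A(1) B(1)])
    also have "\<dots> = 0" using zero ji \<open>i < n\<close> \<open>j < n\<close> by (intro sum.neutral) auto
    finally show "(A * B) $$ (i,j) = 0" .
  qed
  show "(A * B) $$ (i,i) = A $$ (i,i) * B $$ (i,i)" if "i < n" for i
    using that zero by (simp add: index_mult_mat_sum[OF A(1) B(1)] sum_eq_single del: index_mult_mat)
qed

lemma upper_triangular_pow_mat:
  fixes B :: "'a::comm_semiring_1 mat"
  assumes B: "B \<in> carrier_mat n n" "upper_triangular B"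
  shows "upper_triangular (B ^\<^sub>m k) \<and> (\<forall>i<n. (B ^\<^sub>m k) $$ (i,i) = B $$ (i,i) ^ k)"
proof (induction k)
  case (Suc k)
  have "B ^\<^sub>m k \<in> carrier_mat n n" using B by simp
  then show ?case using Suc upper_triangular_mult[OF _ _ B] by (simp add: mult.commute)
qed (use B in auto)

lemma strictly_upper_triangular_pow_mat_entry:
  assumes N: "N \<in> carrier_mat n n"
    and strict: "\<And>i j. i < n \<Longrightarrow> j < n \<Longrightarrow> j \<le> i \<Longrightarrow> N $$ (i,j) = 0"
  shows "i < n \<Longrightarrow> j < n \<Longrightarrow> j < i + k \<Longrightarrow> (N ^\<^sub>m k) $$ (i,j) = 0"
proof (induction k arbitrary: j)
  case (Suc k)
  have Nk: "N ^\<^sub>m k \<in> carrier_mat n n" using N by simp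
  have "(N ^\<^sub>m k * N) $$ (i,j) = (\<Sum>l<n. (N ^\<^sub>m k) $$ (i,l) * N $$ (l,j))"
    using Suc.prems by (intro index_mult_mat_sum[OF Nk N])
  also have "\<dots> = 0"
  proof (intro sum.neutral ballI)
    fix l assume l: "l \<in> {..<n}"
    show "(N ^\<^sub>m k) $$ (i,l) * N $$ (l,j) = 0"
      using Suc.IH[of l] strict[of l j] Suc.prems l by (cases "l < i + k") auto
  qed
  finally show ?case by simp
qed (use N in auto)

lemma strictly_upper_triangular_nilpotent:
  assumes N: "N \<in> carrier_mat n n"
    and strict: "\<And>i j. i < n \<Longrightarrow> j < n \<Longrightarrow> j \<le> i \<Longrightarrow> N $$ (i,j) = 0"
  shows "N ^\<^sub>m n = 0\<^sub>m n n"
  using strictly_upper_triangular_pow_mat_entry[OF N strict, of _ _ n] N by (intro eq_matI) auto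

text \<open>If N^(k+2) = 0 and U = N^k, then U (1 + N)^j = U + j N^(k+1),
  so (1 + N)^m = 1 forces m N^(k+1) = 0.\<close>

lemma unipotent_finite_order_nilpotency_descent:
  fixes N :: "'a::{idom, ring_char_0} mat"
  assumes N: "N \<in> carrier_mat n n" and m: "m > 0" and order: "(1\<^sub>m n + N) ^\<^sub>m m = 1\<^sub>m n"
    and nil: "N ^\<^sub>m Suc (Suc k) = 0\<^sub>m n n"
  shows "N ^\<^sub>m Suc k = 0\<^sub>m n n"
proof -
  define B where "B = 1\<^sub>m n + N"
  define U where "U = N ^\<^sub>m k"
  define W where "W = N ^\<^sub>m Suc k"
  have B: "B \<in> carrier_mat n n" and U: "U \<in> carrier_mat n n" and W: "W \<in> carrier_mat n n"
    using N by (auto simp: B_def U_def W_def)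
  have "U * N = W" by (simp add: U_def W_def)
  then have UB: "U * B = U + W"
    using mult_add_distrib_mat[OF U one_carrier_mat N] U by (simp add: B_def)
  have "W * N = 0\<^sub>m n n" using nil by (simp add: W_def)
  then have WB: "W * B = W"
    using mult_add_distrib_mat[OF W one_carrier_mat N] W by (simp add: B_def)
  have powers: "U * B ^\<^sub>m j = U + of_nat j \<cdot>\<^sub>m W" for j
  proof (induction j)
    case 0
    have "U * B ^\<^sub>m 0 = U" using U B by simp
    moreover have "U + of_nat 0 \<cdot>\<^sub>m W = U" using U W by (intro eq_matI) auto
    ultimately show ?case by simp
  next
    case (Suc j)
    have "U * B ^\<^sub>m Suc j = (U * B ^\<^sub>m j) * B" using U B by (simp add: assoc_mult_mat[of U n n _ n B n])
    also have "\<dots> = U * B + (of_nat j \<cdot>\<^sub>m W) * B" using Suc.IH U W B by (simp add: add_mult_distrib_mat)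
    also have "\<dots> = U + W + of_nat j \<cdot>\<^sub>m W" using U W B UB WB by (simp add: mult_smult_assoc_mat)
    also have "\<dots> = U + of_nat (Suc j) \<cdot>\<^sub>m W" using U W by (intro eq_matI) (auto simp: algebra_simps)
    finally show ?case .
  qed
  have fixed: "U = U + of_nat m \<cdot>\<^sub>m W" using powers[of m] order U by (simp add: B_def)
  have "of_nat m * W $$ (i,j) = 0" if "i < n" "j < n" for i j
  proof -
    have "U $$ (i,j) = (U + of_nat m \<cdot>\<^sub>m W) $$ (i,j)" using fixed by simp
    then show ?thesis using that U W by simp
  qed
  then show ?thesis using W m unfolding W_def by (intro eq_matI) auto
qed

lemma unipotent_finite_order_eq_one:
  fixes B :: "'a::{idom, ring_char_0} mat"
  assumes B: "B \<in> carrier_mat n n" "upper_triangular B" and diag: "\<forall>i<n. B $$ (i,i) = 1"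
    and m: "m > 0" and order: "B ^\<^sub>m m = 1\<^sub>m n"
  shows "B = 1\<^sub>m n"
proof -
  define N where "N = B - 1\<^sub>m n"
  have N: "N \<in> carrier_mat n n" by (simp add: N_def minus_carrier_mat)
  have BN: "B = 1\<^sub>m n + N" using B by (intro eq_matI) (auto simp: N_def)
  have strict: "N $$ (i,j) = 0" if "i < n" "j < n" "j \<le> i" for i j
    using that B diag upper_triangularD[OF B(2), of j i] by (cases "j = i") (auto simp: N_def)
  have descent: "N ^\<^sub>m Suc k = 0\<^sub>m n n \<Longrightarrow> N = 0\<^sub>m n n" for k
  proof (induction k)
    case 0
    then show ?case using N by simp
  next
    case (Suc k)
    then show ?case
      using unipotent_finite_order_nilpotency_descent[OF N m order[unfolded BN]] by blast
  qed
  show ?thesis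
  proof (cases n)
    case 0
    then show ?thesis using B by (intro eq_matI) auto
  next
    case (Suc k)
    then have "N = 0\<^sub>m n n" using descent strictly_upper_triangular_nilpotent[OF N strict] by simp
    then show ?thesis using BN N by simp
  qed
qed

section \<open>Complex matrices of finite order\<close>

lemma root_of_unity_norm:
  fixes z :: complex
  assumes "z ^ m = 1" "m > 0"
  shows "cmod z = 1"
  using assms power_eq_imp_eq_base[of "cmod z" m 1] by (simp add: norm_power[symmetric])

lemma root_of_unity_cnj:
  fixes z :: complex
  assumes "z ^ m = 1" "m > 0"
  shows "cnj z = z ^ (m - 1)"
proof -
  have "cmod z = 1" by (rule root_of_unity_norm[OF assms])
  then have "z * cnj z = 1" using complex_norm_square[of z] by simp
  moreover have "z * z ^ (m - 1) = 1" using assms by (cases m) auto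
  ultimately show ?thesis by (metis mult.left_commute mult_1_right)
qed

lemma sum_norm_one_eq_card_imp_one:
  fixes z :: "'i \<Rightarrow> complex"
  assumes fin: "finite I" and norm: "\<And>i. i \<in> I \<Longrightarrow> cmod (z i) = 1"
    and sum: "(\<Sum>i\<in>I. z i) = of_nat (card I)"
  shows "i \<in> I \<Longrightarrow> z i = 1"
proof -
  have "(\<Sum>i\<in>I. 1 - Re (z i)) = 0"
    using arg_cong[OF sum, of Re] by (simp add: Re_sum sum_subtractf)
  moreover have "0 \<le> 1 - Re (z i)" if "i \<in> I" for i
    using norm[OF that] complex_Re_le_cmod[of "z i"] by simp
  ultimately have Re: "Re (z i) = 1" if "i \<in> I" for i
    using that fin sum_nonneg_eq_0_iff[of I "\<lambda>i. 1 - Re (z i)"] by auto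
  assume i: "i \<in> I"
  have "cmod (z i) ^ 2 = Re (z i) ^ 2 + Im (z i) ^ 2" by (simp add: cmod_power2)
  then have "Im (z i) = 0" using norm[OF i] Re[OF i] by simp
  then show "z i = 1" using Re[OF i] by (simp add: complex_eq_iff)
qed

lemma finite_order_mat_triangularization:
  fixes A :: "complex mat"
  assumes A: "A \<in> carrier_mat n n" and order: "A ^\<^sub>m m = 1\<^sub>m n"
  obtains B P Q where "similar_mat_wit A B P Q" "B \<in> carrier_mat n n" "upper_triangular B"
    "B ^\<^sub>m m = 1\<^sub>m n" "\<And>i. i < n \<Longrightarrow> B $$ (i,i) ^ m = 1"
proof -
  obtain es where "char_poly A = (\<Prod>a\<leftarrow>es. [:-a,1:])" using char_poly_factorized[OF A] by blast
  then obtain B where B: "B \<in> carrier_mat n n" "upper_triangular B" "similar_mat A B"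
    using schur_decomposition_exists[OF A] by blast
  then obtain P Q where wit: "similar_mat_wit A B P Q" unfolding similar_mat_def by blast
  then have P: "P \<in> carrier_mat n n" and Q: "Q \<in> carrier_mat n n" and QP: "Q * P = 1\<^sub>m n"
    using A unfolding similar_mat_wit_def Let_def by auto
  have "B ^\<^sub>m m = Q * A ^\<^sub>m m * P" by (rule similar_mat_wit_pow_id[OF similar_mat_wit_sym[OF wit]])
  also have "\<dots> = 1\<^sub>m n" using order Q P QP by simp
  finally have Bm: "B ^\<^sub>m m = 1\<^sub>m n" .
  have "B $$ (i,i) ^ m = 1" if "i < n" for i
    using upper_triangular_pow_mat[OF B(1,2), of m] Bm that by simp
  then show ?thesis using that wit B Bm by blast
qed

lemma mat_trace_pow_triangularization:
  fixes A :: "complex mat"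
  assumes wit: "similar_mat_wit A B P Q" and A: "A \<in> carrier_mat n n"
    and B: "B \<in> carrier_mat n n" "upper_triangular B"
  shows "mat_trace (A ^\<^sub>m k) = (\<Sum>i<n. B $$ (i,i) ^ k)"
proof -
  have Ak: "A ^\<^sub>m k \<in> carrier_mat n n" using A by simp
  have "mat_trace (A ^\<^sub>m k) = mat_trace (B ^\<^sub>m k)"
    by (rule mat_trace_similar_mat_wit[OF similar_mat_wit_pow[OF wit] Ak])
  also have "\<dots> = (\<Sum>i<n. B $$ (i,i) ^ k)"
    using upper_triangular_pow_mat[OF B, of k] B by (simp add: mat_trace_carrier[of _ n])
  finally show ?thesis .
qed

lemma finite_order_mat_trace_pow_pred:
  fixes A :: "complex mat"
  assumes A: "A \<in> carrier_mat n n" and m: "m > 0" and order: "A ^\<^sub>m m = 1\<^sub>m n"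
  shows "mat_trace (A ^\<^sub>m (m - 1)) = cnj (mat_trace A)"
proof -
  obtain B P Q where wit: "similar_mat_wit A B P Q" and B: "B \<in> carrier_mat n n" "upper_triangular B"
    and roots: "\<And>i. i < n \<Longrightarrow> B $$ (i,i) ^ m = 1"
    using finite_order_mat_triangularization[OF A order] by metis
  have "mat_trace (A ^\<^sub>m (m - 1)) = (\<Sum>i<n. B $$ (i,i) ^ (m - 1))"
    by (rule mat_trace_pow_triangularization[OF wit A B])
  also have "\<dots> = (\<Sum>i<n. cnj (B $$ (i,i)))"
    using roots m by (intro sum.cong refl) (simp add: root_of_unity_cnj[of _ m])
  also have "\<dots> = cnj (mat_trace A)"
    using mat_trace_pow_triangularization[OF wit A B, of 1] A by simp
  finally show ?thesis .
qed

lemma finite_order_mat_trace_eq_dim_imp_one: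
  fixes A :: "complex mat"
  assumes A: "A \<in> carrier_mat n n" and m: "m > 0" and order: "A ^\<^sub>m m = 1\<^sub>m n"
    and trace: "mat_trace A = of_nat n"
  shows "A = 1\<^sub>m n"
proof -
  obtain B P Q where wit: "similar_mat_wit A B P Q" and B: "B \<in> carrier_mat n n" "upper_triangular B"
    and Bm: "B ^\<^sub>m m = 1\<^sub>m n" and roots: "\<And>i. i < n \<Longrightarrow> B $$ (i,i) ^ m = 1"
    using finite_order_mat_triangularization[OF A order] by metis
  have "(\<Sum>i<n. B $$ (i,i)) = of_nat (card {..<n})"
    using mat_trace_pow_triangularization[OF wit A B, of 1] A trace by simp
  then have "B $$ (i,i) = 1" if "i < n" for i
    using that roots m root_of_unity_norm by (intro sum_norm_one_eq_card_imp_one[of "{..<n}"]) auto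
  then have "B = 1\<^sub>m n" using unipotent_finite_order_eq_one[OF B _ m Bm] by blast
  then show ?thesis using wit A unfolding similar_mat_wit_def Let_def by auto
qed

section \<open>Representations and characters\<close>

definition character :: "('g, 'b) monoid_scheme \<Rightarrow> ('g \<Rightarrow> complex mat) \<Rightarrow> 'g \<Rightarrow> complex" where
  "character G \<rho> = (\<lambda>g\<in>carrier G. mat_trace (\<rho> g))"

lemma Irr_iff: "\<chi> \<in> Irr G \<longleftrightarrow> (\<exists>n \<rho>. is_irr_rep G n \<rho> \<and> \<chi> = character G \<rho>)"
  unfolding Irr_def character_def by blast

lemma is_irr_rep_is_rep: "is_irr_rep G n \<rho> \<Longrightarrow> is_rep G n \<rho>"
  unfolding is_irr_rep_def by simp

lemma rep_carrier_mat: "is_rep G n \<rho> \<Longrightarrow> g \<in> carrier G \<Longrightarrow> \<rho> g \<in> carrier_mat n n"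
  unfolding is_rep_def by auto

lemma rep_one: "is_rep G n \<rho> \<Longrightarrow> \<rho> \<one>\<^bsub>G\<^esub> = 1\<^sub>m n"
  unfolding is_rep_def by auto

lemma rep_mult:
  "is_rep G n \<rho> \<Longrightarrow> g \<in> carrier G \<Longrightarrow> h \<in> carrier G \<Longrightarrow> \<rho> (g \<otimes>\<^bsub>G\<^esub> h) = \<rho> g * \<rho> h"
  unfolding is_rep_def by auto

lemma rep_degree_pos: "is_rep G n \<rho> \<Longrightarrow> n > 0"
  unfolding is_rep_def by auto

lemma schur_lemma:
  assumes irr: "is_irr_rep G n \<rho>" and M: "M \<in> carrier_mat n n"
    and comm: "\<And>g. g \<in> carrier G \<Longrightarrow> M * \<rho> g = \<rho> g * M"
  obtains c where "M = c \<cdot>\<^sub>m 1\<^sub>m n"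
proof -
  have rep: "is_rep G n \<rho>" by (rule is_irr_rep_is_rep[OF irr])
  obtain c where "eigenvalue M c"
    using spectrum_non_empty[OF M rep_degree_pos[OF rep]] unfolding spectrum_def by auto
  then obtain v where v: "v \<in> carrier_vec n" "v \<noteq> 0\<^sub>v n" "M *\<^sub>v v = c \<cdot>\<^sub>v v"
    using M unfolding eigenvalue_def eigenvector_def by auto
  define W where "W = {w \<in> carrier_vec n. M *\<^sub>v w = c \<cdot>\<^sub>v w}"
  have subspace: "is_subspace n W"
    unfolding is_subspace_def
  proof (intro conjI ballI allI)
    show "0\<^sub>v n \<in> W" unfolding W_def using M by (auto intro!: eq_vecI)
    show "x + y \<in> W" if "x \<in> W" "y \<in> W" for x y
      using that M unfolding W_def by (auto simp: mult_add_distrib_mat_vec smult_add_distrib_vec)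
    show "a \<cdot>\<^sub>v x \<in> W" if "x \<in> W" for a x
      using that M unfolding W_def by (auto simp: mult_mat_vec smult_smult_assoc mult.commute)
  qed (auto simp: W_def)
  have invariant: "\<rho> g *\<^sub>v w \<in> W" if g: "g \<in> carrier G" and w: "w \<in> W" for g w
  proof -
    have \<rho>g: "\<rho> g \<in> carrier_mat n n" by (rule rep_carrier_mat[OF rep g])
    have wc: "w \<in> carrier_vec n" and Mw: "M *\<^sub>v w = c \<cdot>\<^sub>v w" using w unfolding W_def by auto
    have "M *\<^sub>v (\<rho> g *\<^sub>v w) = (M * \<rho> g) *\<^sub>v w" using M \<rho>g wc by (simp add: assoc_mult_mat_vec)
    also have "\<dots> = \<rho> g *\<^sub>v (M *\<^sub>v w)" using M \<rho>g wc comm[OF g] by (simp add: assoc_mult_mat_vec)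
    also have "\<dots> = c \<cdot>\<^sub>v (\<rho> g *\<^sub>v w)" using Mw \<rho>g wc by (simp add: mult_mat_vec)
    finally show ?thesis unfolding W_def using \<rho>g wc by auto
  qed
  have "\<forall>g\<in>carrier G. \<forall>w\<in>W. \<rho> g *\<^sub>v w \<in> W" using invariant by blast
  then have "W = {0\<^sub>v n} \<or> W = carrier_vec n"
    using irr subspace unfolding is_irr_rep_def by blast
  moreover have "v \<in> W" using v unfolding W_def by auto
  ultimately have W: "W = carrier_vec n" using v(2) by blast
  have eigen: "M *\<^sub>v unit_vec n j = c \<cdot>\<^sub>v unit_vec n j" if "j < n" for j
  proof -
    have "unit_vec n j \<in> W" using W that by simp
    then show ?thesis unfolding W_def by simp
  qed
  have "M = c \<cdot>\<^sub>m 1\<^sub>m n"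
  proof (rule eq_matI)
    fix i j assume i: "i < dim_row (c \<cdot>\<^sub>m 1\<^sub>m n)" and j: "j < dim_col (c \<cdot>\<^sub>m 1\<^sub>m n)"
    have "(M *\<^sub>v unit_vec n j) $ i = (c \<cdot>\<^sub>v unit_vec n j) $ i" using eigen j by simp
    then show "M $$ (i,j) = (c \<cdot>\<^sub>m 1\<^sub>m n) $$ (i,j)"
      using i j M by (simp add: scalar_prod_right_unit)
  qed (use M in auto)
  then show ?thesis by (rule that)
qed

context group
begin

lemma rep_inv_mult: "is_rep G n \<rho> \<Longrightarrow> g \<in> carrier G \<Longrightarrow> \<rho> (inv g) * \<rho> g = 1\<^sub>m n"
  using rep_mult[of G n \<rho> "inv g" g] rep_one[of G n \<rho>] by simp

lemma rep_pow: "is_rep G n \<rho> \<Longrightarrow> g \<in> carrier G \<Longrightarrow> \<rho> (g [^] (k::nat)) = \<rho> g ^\<^sub>m k"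
  using rep_carrier_mat[of G n \<rho> g] by (induction k) (simp_all add: rep_one rep_mult)

lemma character_one: "is_rep G n \<rho> \<Longrightarrow> character G \<rho> \<one> = of_nat n"
  by (simp add: character_def rep_one mat_trace_one)

lemma trivial_rep_irr: "is_irr_rep G 1 (\<lambda>_. 1\<^sub>m 1)"
  unfolding is_irr_rep_def
proof (intro conjI allI impI)
  show "is_rep G 1 (\<lambda>_. 1\<^sub>m 1)" unfolding is_rep_def by simp
  fix W assume "is_subspace 1 W \<and> (\<forall>g\<in>carrier G. \<forall>w\<in>W. 1\<^sub>m 1 *\<^sub>v w \<in> W)"
  then have W: "W \<subseteq> carrier_vec 1" "0\<^sub>v 1 \<in> W" and smult: "\<And>c v. v \<in> W \<Longrightarrow> c \<cdot>\<^sub>v v \<in> W"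
    unfolding is_subspace_def by auto
  show "W = {0\<^sub>v 1} \<or> W = carrier_vec 1"
  proof (cases "W \<subseteq> {0\<^sub>v 1}")
    case False
    then obtain w where w: "w \<in> W" "w \<noteq> 0\<^sub>v 1" by auto
    then have w0: "w $ 0 \<noteq> 0" using W by (auto intro!: eq_vecI)
    have "v = (v $ 0 / w $ 0) \<cdot>\<^sub>v w" if "v \<in> carrier_vec 1" for v
      using that w W w0 by (intro eq_vecI) auto
    then have "carrier_vec 1 \<subseteq> W" using smult[OF w(1)] by (metis subsetI)
    then show ?thesis using W by auto
  qed (use W in auto)
qed

lemma one_in_cd: "1 \<in> cd G"
proof -
  have "character G (\<lambda>_. 1\<^sub>m 1) \<in> Irr G" using trivial_rep_irr by (auto simp: Irr_iff)
  moreover have "character G (\<lambda>_. 1\<^sub>m 1) \<one> = 1"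
    using character_one[OF is_irr_rep_is_rep[OF trivial_rep_irr]] by simp
  ultimately show ?thesis unfolding cd_def by (metis (mono_tags, lifting) mem_Collect_eq)
qed

lemma sum_carrier_translate: "h \<in> carrier G \<Longrightarrow> (\<Sum>g\<in>carrier G. f (h \<otimes> g)) = sum f (carrier G)"
  using sum.reindex[OF inj_on_cmult, of h f] surj_const_mult[of h] by simp

text \<open>T is the sum of \<rho>(g) E \<rho>(g\<inverse>) over G for the matrix unit E at (j, k); it commutes
  with the representation because translating g by h permutes the summands.\<close>

lemma averaged_coefficients_commute:
  assumes rep: "is_rep G n \<rho>" and j: "j < n" and k: "k < n" and h: "h \<in> carrier G"
  defines "T \<equiv> mat n n (\<lambda>(i,l). \<Sum>g\<in>carrier G. \<rho> g $$ (i,j) * \<rho> (inv g) $$ (k,l))"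
  shows "T * \<rho> h = \<rho> h * T"
proof -
  have T: "T \<in> carrier_mat n n" unfolding T_def by simp
  have \<rho>: "\<And>g. g \<in> carrier G \<Longrightarrow> \<rho> g \<in> carrier_mat n n" by (rule rep_carrier_mat[OF rep])
  have entry: "\<rho> (g \<otimes> g') $$ (i,l) = (\<Sum>b<n. \<rho> g $$ (i,b) * \<rho> g' $$ (b,l))"
    if "g \<in> carrier G" "g' \<in> carrier G" "i < n" "l < n" for g g' i l
    using that by (simp add: rep_mult[OF rep] index_mult_mat_sum[OF \<rho> \<rho>] del: index_mult_mat)
  show ?thesis
  proof (rule eq_matI)
    fix i l assume "i < dim_row (\<rho> h * T)" "l < dim_col (\<rho> h * T)"
    then have i: "i < n" and l: "l < n" using \<rho>[OF h] T by auto
    have "(T * \<rho> h) $$ (i,l) = (\<Sum>b<n. T $$ (i,b) * \<rho> h $$ (b,l))"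
      by (rule index_mult_mat_sum[OF T \<rho>[OF h] i l])
    also have "\<dots> = (\<Sum>b<n. (\<Sum>g\<in>carrier G. \<rho> g $$ (i,j) * \<rho> (inv g) $$ (k,b)) * \<rho> h $$ (b,l))"
      using i by (simp add: T_def)
    also have "\<dots> = (\<Sum>g\<in>carrier G. \<rho> g $$ (i,j) * (\<Sum>b<n. \<rho> (inv g) $$ (k,b) * \<rho> h $$ (b,l)))"
      unfolding sum_distrib_left sum_distrib_right mult.assoc by (rule sum.swap)
    also have "\<dots> = (\<Sum>g\<in>carrier G. \<rho> g $$ (i,j) * \<rho> (inv g \<otimes> h) $$ (k,l))"
      using h k l by (simp add: entry)
    also have "\<dots> = (\<Sum>g\<in>carrier G. \<rho> (h \<otimes> g) $$ (i,j) * \<rho> (inv (h \<otimes> g) \<otimes> h) $$ (k,l))"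
      by (rule sum_carrier_translate[OF h, symmetric])
    also have "\<dots> = (\<Sum>g\<in>carrier G. (\<Sum>a<n. \<rho> h $$ (i,a) * \<rho> g $$ (a,j)) * \<rho> (inv g) $$ (k,l))"
      using h i j by (intro sum.cong refl) (simp add: entry inv_mult_group m_assoc)
    also have "\<dots> = (\<Sum>a<n. \<rho> h $$ (i,a) * (\<Sum>g\<in>carrier G. \<rho> g $$ (a,j) * \<rho> (inv g) $$ (k,l)))"
      unfolding sum_distrib_left sum_distrib_right mult.assoc by (rule sum.swap)
    also have "\<dots> = (\<Sum>a<n. \<rho> h $$ (i,a) * T $$ (a,l))"
      using l by (simp add: T_def)
    also have "\<dots> = (\<rho> h * T) $$ (i,l)"
      by (rule index_mult_mat_sum[OF \<rho>[OF h] T i l, symmetric])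
    finally show "(T * \<rho> h) $$ (i,l) = (\<rho> h * T) $$ (i,l)" .
  qed (use T \<rho>[OF h] in auto)
qed

lemma schur_orthogonality:
  assumes irr: "is_irr_rep G n \<rho>" and ijkl: "i < n" "j < n" "k < n" "l < n"
  shows "(\<Sum>g\<in>carrier G. \<rho> g $$ (i,j) * \<rho> (inv g) $$ (k,l))
    = (if i = l \<and> j = k then of_nat (card (carrier G)) / of_nat n else 0)"
proof -
  have rep: "is_rep G n \<rho>" by (rule is_irr_rep_is_rep[OF irr])
  have \<rho>: "\<And>g. g \<in> carrier G \<Longrightarrow> \<rho> g \<in> carrier_mat n n" by (rule rep_carrier_mat[OF rep])
  define T where "T = mat n n (\<lambda>(i,l). \<Sum>g\<in>carrier G. \<rho> g $$ (i,j) * \<rho> (inv g) $$ (k,l))"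
  obtain c where c: "T = c \<cdot>\<^sub>m 1\<^sub>m n"
    using schur_lemma[OF irr, of T] averaged_coefficients_commute[OF rep ijkl(2,3)]
    unfolding T_def by auto
  have "of_nat n * c = (\<Sum>a<n. T $$ (a,a))" unfolding c by simp
  also have "\<dots> = (\<Sum>g\<in>carrier G. \<Sum>a<n. \<rho> (inv g) $$ (k,a) * \<rho> g $$ (a,j))"
    unfolding T_def by (simp add: mult.commute sum.swap[of _ "{..<n}"])
  also have "\<dots> = (\<Sum>g\<in>carrier G. (\<rho> (inv g) * \<rho> g) $$ (k,j))"
    using ijkl by (intro sum.cong refl) (simp add: index_mult_mat_sum[OF \<rho> \<rho>] del: index_mult_mat)
  also have "\<dots> = of_nat (card (carrier G)) * (if j = k then 1 else 0)"
    using ijkl by (simp add: rep_inv_mult[OF rep])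
  finally have "c = of_nat (card (carrier G)) * (if j = k then 1 else 0) / of_nat n"
    using rep_degree_pos[OF rep] by (simp add: field_simps)
  moreover have "(\<Sum>g\<in>carrier G. \<rho> g $$ (i,j) * \<rho> (inv g) $$ (k,l)) = T $$ (i,l)"
    using ijkl unfolding T_def by simp
  ultimately show ?thesis using ijkl unfolding c by auto
qed

lemma character_orthogonality:
  assumes irr: "is_irr_rep G n \<rho>"
  shows "(\<Sum>g\<in>carrier G. character G \<rho> g * character G \<rho> (inv g)) = of_nat (card (carrier G))"
proof -
  have rep: "is_rep G n \<rho>" by (rule is_irr_rep_is_rep[OF irr])
  have "(\<Sum>g\<in>carrier G. character G \<rho> g * character G \<rho> (inv g))
     = (\<Sum>g\<in>carrier G. \<Sum>a<n. \<Sum>b<n. \<rho> g $$ (a,a) * \<rho> (inv g) $$ (b,b))"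
    by (intro sum.cong refl)
      (simp add: character_def mat_trace_carrier[OF rep_carrier_mat[OF rep]] sum_product)
  also have "\<dots> = (\<Sum>a<n. \<Sum>b<n. \<Sum>g\<in>carrier G. \<rho> g $$ (a,a) * \<rho> (inv g) $$ (b,b))"
    by (subst sum.swap, rule sum.cong[OF refl], rule sum.swap)
  also have "\<dots> = (\<Sum>a<n. of_nat (card (carrier G)) / of_nat n)"
    by (simp add: schur_orthogonality[OF irr])
  also have "\<dots> = of_nat (card (carrier G))" using rep_degree_pos[OF rep] by simp
  finally show ?thesis .
qed

lemma nonlinear_degrees_eq:
  assumes cd: "card (cd G) = 2" and \<phi>: "\<phi> \<in> nl G" and \<chi>: "\<chi> \<in> nl G"
  shows "\<phi> \<one> = \<chi> \<one>"
proof (rule ccontr)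
  assume ne: "\<phi> \<one> \<noteq> \<chi> \<one>"
  have "{1, \<phi> \<one>, \<chi> \<one>} \<subseteq> cd G" using one_in_cd \<phi> \<chi> unfolding nl_def cd_def by blast
  moreover have "finite (cd G)" using cd card.infinite by fastforce
  ultimately have "card {1, \<phi> \<one>, \<chi> \<one>} \<le> 2" using cd card_mono by metis
  moreover have "card {1, \<phi> \<one>, \<chi> \<one>} = 3" using ne \<phi> \<chi> unfolding nl_def by auto
  ultimately show False by simp
qed

lemma mult_swap_commutator:
  assumes "g \<in> carrier G" "x \<in> carrier G"
  shows "g \<otimes> x = x \<otimes> g \<otimes> (inv g \<otimes> inv x \<otimes> g \<otimes> x)"
proof -
  have cancel: "a \<otimes> b \<otimes> inv b = a" if "a \<in> carrier G" "b \<in> carrier G" for a b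
    using that by (simp add: m_assoc)
  show ?thesis using assms by (simp add: m_assoc[symmetric] cancel)
qed

end

locale finite_group = group +
  assumes finite_carrier: "finite (carrier G)"
begin

lemma order_pos: "Coset.order G > 0"
  using finite_carrier order_gt_0_iff_finite by blast

lemma rep_pow_order: "is_rep G n \<rho> \<Longrightarrow> g \<in> carrier G \<Longrightarrow> \<rho> g ^\<^sub>m Coset.order G = 1\<^sub>m n"
  using rep_pow[of n \<rho> g "Coset.order G"] pow_order_eq_1[of g] rep_one[of G n \<rho>] by simp

lemma inv_eq_pow_order_pred:
  assumes g: "g \<in> carrier G"
  shows "inv g = g [^] (Coset.order G - 1)"
proof (rule inv_equality)
  have "g [^] (Coset.order G - 1) \<otimes> g = g [^] Suc (Coset.order G - 1)" by simp
  also have "\<dots> = \<one>" using order_pos pow_order_eq_1[OF g] by simp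
  finally show "g [^] (Coset.order G - 1) \<otimes> g = \<one>" .
qed (use g in auto)

lemma character_inv:
  assumes rep: "is_rep G n \<rho>" and g: "g \<in> carrier G"
  shows "character G \<rho> (inv g) = cnj (character G \<rho> g)"
proof -
  have "\<rho> (inv g) = \<rho> g ^\<^sub>m (Coset.order G - 1)"
    using inv_eq_pow_order_pred[OF g] rep_pow[OF rep g] by simp
  then show ?thesis
    using g finite_order_mat_trace_pow_pred[OF rep_carrier_mat[OF rep g] order_pos
        rep_pow_order[OF rep g]]
    by (simp add: character_def)
qed

lemma character_eq_degree_imp_rep_one:
  assumes rep: "is_rep G n \<rho>" and g: "g \<in> carrier G" and "character G \<rho> g = of_nat n"
  shows "\<rho> g = 1\<^sub>m n"
  using assms finite_order_mat_trace_eq_dim_imp_one[OF rep_carrier_mat[OF rep g] order_pos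
      rep_pow_order[OF rep g]]
  by (simp add: character_def)

lemma rep_central_imp_Zchar:
  assumes irr: "is_irr_rep G n \<rho>" and g: "g \<in> carrier G"
    and central: "\<And>x. x \<in> carrier G \<Longrightarrow> \<rho> g * \<rho> x = \<rho> x * \<rho> g"
  shows "g \<in> Zchar G (character G \<rho>)"
proof -
  have rep: "is_rep G n \<rho>" by (rule is_irr_rep_is_rep[OF irr])
  have n: "n > 0" by (rule rep_degree_pos[OF rep])
  obtain \<mu> where \<mu>: "\<rho> g = \<mu> \<cdot>\<^sub>m 1\<^sub>m n"
    using schur_lemma[OF irr rep_carrier_mat[OF rep g]] central by metis
  have "upper_triangular (\<rho> g)" unfolding \<mu> by auto
  then have "\<mu> ^ Coset.order G = (\<rho> g ^\<^sub>m Coset.order G) $$ (0,0)"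
    using upper_triangular_pow_mat[OF rep_carrier_mat[OF rep g]] n \<mu> by simp
  also have "\<dots> = 1" using rep_pow_order[OF rep g] n by simp
  finally have "cmod \<mu> = 1" using root_of_unity_norm order_pos by blast
  moreover have "character G \<rho> g = of_nat n * \<mu>" using g \<mu> by (simp add: character_def mat_trace_def)
  ultimately show ?thesis using g character_one[OF rep] by (simp add: Zchar_def norm_mult)
qed

lemma character_norm_sum:
  assumes irr: "is_irr_rep G n \<rho>"
  shows "(\<Sum>g\<in>carrier G. (cmod (character G \<rho> g))\<^sup>2) = real (card (carrier G))"
proof -
  have "of_real ((cmod (character G \<rho> g))\<^sup>2) = character G \<rho> g * character G \<rho> (inv g)"
    if "g \<in> carrier G" for g
    unfolding character_inv[OF is_irr_rep_is_rep[OF irr] that] by (rule complex_norm_square)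
  then have "complex_of_real (\<Sum>g\<in>carrier G. (cmod (character G \<rho> g))\<^sup>2)
      = (\<Sum>g\<in>carrier G. character G \<rho> g * character G \<rho> (inv g))"
    by simp
  also have "\<dots> = of_real (real (card (carrier G)))" by (simp add: character_orthogonality[OF irr])
  finally show ?thesis by (simp only: of_real_eq_iff)
qed

lemma GVZ_card_Zchar:
  assumes gvz: "GVZ G" and \<chi>: "\<chi> \<in> Irr G"
  shows "real (card (Zchar G \<chi>)) * (cmod (\<chi> \<one>))\<^sup>2 = real (card (carrier G))"
proof -
  obtain n \<rho> where irr: "is_irr_rep G n \<rho>" and \<chi>\<rho>: "\<chi> = character G \<rho>"
    using \<chi> by (auto simp: Irr_iff)
  have "(cmod (\<chi> g))\<^sup>2 = (if g \<in> Zchar G \<chi> then (cmod (\<chi> \<one>))\<^sup>2 else 0)" if "g \<in> carrier G" for g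
    using gvz \<chi> that unfolding GVZ_def Zchar_def by auto
  then have "(\<Sum>g\<in>carrier G. (cmod (\<chi> g))\<^sup>2)
      = (\<Sum>g\<in>carrier G. if g \<in> Zchar G \<chi> then (cmod (\<chi> \<one>))\<^sup>2 else 0)"
    by (intro sum.cong) auto
  also have "\<dots> = real (card (Zchar G \<chi>)) * (cmod (\<chi> \<one>))\<^sup>2"
    using finite_carrier by (simp add: sum.If_cases Zchar_def Int_def)
  finally show ?thesis using character_norm_sum[OF irr] \<chi>\<rho> by simp
qed

lemma commutators_in_ker_imp_subset_Zchar:
  assumes \<chi>: "\<chi> \<in> Irr G" and A: "A \<subseteq> carrier G"
    and ker: "comm_subgroup G A (carrier G) \<subseteq> ker_char G \<chi>"
  shows "A \<subseteq> Zchar G \<chi>"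
proof
  fix g assume gA: "g \<in> A"
  then have g: "g \<in> carrier G" using A by blast
  obtain n \<rho> where irr: "is_irr_rep G n \<rho>" and \<chi>\<rho>: "\<chi> = character G \<rho>"
    using \<chi> by (auto simp: Irr_iff)
  have rep: "is_rep G n \<rho>" by (rule is_irr_rep_is_rep[OF irr])
  have "\<rho> g * \<rho> x = \<rho> x * \<rho> g" if x: "x \<in> carrier G" for x
  proof -
    define c where "c = inv g \<otimes> inv x \<otimes> g \<otimes> x"
    have c: "c \<in> carrier G" unfolding c_def using g x by simp
    have "c \<in> comm_subgroup G A (carrier G)"
      unfolding comm_subgroup_def c_def by (rule generate.incl) (use gA x in blast)
    then have "character G \<rho> c = of_nat n"
      using ker character_one[OF rep] \<chi>\<rho> unfolding ker_char_def by auto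
    then have \<rho>c: "\<rho> c = 1\<^sub>m n" by (rule character_eq_degree_imp_rep_one[OF rep c])
    have "g \<otimes> x = x \<otimes> g \<otimes> c" unfolding c_def by (rule mult_swap_commutator[OF g x])
    then have "\<rho> g * \<rho> x = \<rho> (x \<otimes> g \<otimes> c)" using rep_mult[OF rep g x] by simp
    also have "\<dots> = \<rho> x * \<rho> g * \<rho> c" using g x c by (simp add: rep_mult[OF rep])
    finally show ?thesis using \<rho>c rep_carrier_mat[OF rep g] rep_carrier_mat[OF rep x] by simp
  qed
  then show "g \<in> Zchar G \<chi>" using rep_central_imp_Zchar[OF irr g] \<chi>\<rho> by simp
qed

end

theorem mainTheorem6:
  fixes G :: "('g, 'b) monoid_scheme" and \<phi> \<chi> :: "'g \<Rightarrow> complex"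
  assumes "group G" and "finite (carrier G)" and "GVZ G" and "card (cd G) = 2"
    and "\<phi> \<in> nl G" and "\<chi> \<in> nl G"
    and "comm_subgroup G (Zchar G \<phi>) (carrier G) \<subseteq> ker_char G \<chi>"
  shows "Zchar G \<phi> = Zchar G \<chi>"
proof -
  interpret finite_group G
    using assms(1,2) by (simp add: finite_group_def finite_group_axioms_def)
  have Irr: "\<phi> \<in> Irr G" "\<chi> \<in> Irr G" using assms(5,6) by (auto simp: nl_def)
  have sub: "Zchar G \<phi> \<subseteq> Zchar G \<chi>"
    using commutators_in_ker_imp_subset_Zchar[OF Irr(2) _ assms(7)] by (auto simp: Zchar_def)
  have "card (carrier G) > 0" using finite_carrier one_closed by (auto simp: card_gt_0_iff)
  then have degree: "(cmod (\<chi> \<one>\<^bsub>G\<^esub>))\<^sup>2 \<noteq> 0" using GVZ_card_Zchar[OF assms(3) Irr(2)] by auto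
  have "\<phi> \<one>\<^bsub>G\<^esub> = \<chi> \<one>\<^bsub>G\<^esub>" by (rule nonlinear_degrees_eq[OF assms(4-6)])
  then have "real (card (Zchar G \<phi>)) * (cmod (\<chi> \<one>\<^bsub>G\<^esub>))\<^sup>2
      = real (card (Zchar G \<chi>)) * (cmod (\<chi> \<one>\<^bsub>G\<^esub>))\<^sup>2"
    using GVZ_card_Zchar[OF assms(3) Irr(1)] GVZ_card_Zchar[OF assms(3) Irr(2)] by simp
  then have "card (Zchar G \<phi>) = card (Zchar G \<chi>)" using degree by simp
  moreover have "finite (Zchar G \<chi>)" using finite_carrier by (simp add: Zchar_def)
  ultimately show ?thesis using sub card_subset_eq by blast
qed

end
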